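(* Consider an instance of restricted assignment with interval restrictions in which every job has a nonempty eligible interval, with machines identified with $\{0,\dots,m-1\}$ in their order and $\mathcal{M}(j)=\{\ell(j),\dots,r(j)\}$. Let $\mathrm{OPT}$ be the optimal makespan and let $$L=\max\Big\{\max_{j\in\mathcal{J}}p_j,\ \max_{0\le \ell\le r\le m-1}\frac{p(\mathcal{J}(\ell,r))}{r-\ell+1}\Big\},$$ where $\mathcal{J}(\ell,r)=\{j\in\mathcal{J}: \mathcal{M}(j)\subseteq\{\ell,\dots,r\}\}$ and $p(J)=\sum_{j\in J}p_j$. Consider the least flexible first heuristic: starting with machine $i^*=0$, repeatedly do the following: let $J$ be the set of not yet placed jobs eligible on $i^*$; if the load currently placed on $i^*$ is at most $L$ and $J\neq\emptyset$, place on $i^*$ a job $j\in J$ with minimal $r(j)$ and consider $i^*$ again; otherwise move to the next machine $i^*+1$, or stop if there is none. Then this heuristic places every job, and every machine receives a load of at most $L+\max_{j\in\mathcal{J}}p_j\le 2\,\mathrm{OPT}$.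
   Context: Restricted assignment with interval restrictions: jobs $\mathcal{J}$ with sizes $p_j\ge0$, machines $\{0,\dots,m-1\}$ in a fixed order, each job $j$ eligible exactly on the consecutive machines $\{\ell(j),\dots,r(j)\}$; a schedule assigns each job to an eligible machine, the load of a machine is the total size of jobs assigned to it, and the makespan is the maximum load; $\mathrm{OPT}$ is the minimum makespan over all schedules. *)

theory Defs
  imports Complex_Main
begin

definition jobs_in :: "'j set \<Rightarrow> ('j \<Rightarrow> nat) \<Rightarrow> ('j \<Rightarrow> nat) \<Rightarrow> nat \<Rightarrow> nat \<Rightarrow> 'j set" where
  "jobs_in J l r a b = {j \<in> J. {l j..r j} \<subseteq> {a..b}}"

text \<open>Maximum job size (0 for an empty job set; sizes are nonnegative).\<close>
definition pmax :: "'j set \<Rightarrow> ('j \<Rightarrow> real) \<Rightarrow> real" where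
  "pmax J p = Max (insert 0 (p ` J))"

definition lbound :: "'j set \<Rightarrow> ('j \<Rightarrow> real) \<Rightarrow> ('j \<Rightarrow> nat) \<Rightarrow> ('j \<Rightarrow> nat) \<Rightarrow> nat \<Rightarrow> real" where
  "lbound J p l r m = max (pmax J p)
     (Max {sum p (jobs_in J l r a b) / real (b - a + 1) | a b. a \<le> b \<and> b \<le> m - 1})"

definition feasible :: "'j set \<Rightarrow> ('j \<Rightarrow> nat) \<Rightarrow> ('j \<Rightarrow> nat) \<Rightarrow> ('j \<Rightarrow> nat) \<Rightarrow> bool" where
  "feasible J l r \<sigma> \<longleftrightarrow> (\<forall>j\<in>J. l j \<le> \<sigma> j \<and> \<sigma> j \<le> r j)"

definition makespan :: "'j set \<Rightarrow> ('j \<Rightarrow> real) \<Rightarrow> nat \<Rightarrow> ('j \<Rightarrow> nat) \<Rightarrow> real" where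
  "makespan J p m \<sigma> = Max ((\<lambda>i. sum p {j \<in> J. \<sigma> j = i}) ` {..<m})"

definition OPT :: "'j set \<Rightarrow> ('j \<Rightarrow> real) \<Rightarrow> ('j \<Rightarrow> nat) \<Rightarrow> ('j \<Rightarrow> nat) \<Rightarrow> nat \<Rightarrow> real" where
  "OPT J p l r m = Inf (makespan J p m ` {\<sigma>. feasible J l r \<sigma>})"

text \<open>Heuristic states: (current machine, partial assignment).\<close>
definition avail :: "'j set \<Rightarrow> ('j \<Rightarrow> nat) \<Rightarrow> ('j \<Rightarrow> nat) \<Rightarrow> ('j \<Rightarrow> nat option) \<Rightarrow> nat \<Rightarrow> 'j set" where
  "avail J l r A i = {j \<in> J. A j = None \<and> l j \<le> i \<and> i \<le> r j}"

definition cur_load :: "'j set \<Rightarrow> ('j \<Rightarrow> real) \<Rightarrow> ('j \<Rightarrow> nat option) \<Rightarrow> nat \<Rightarrow> real" where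
  "cur_load J p A i = sum p {j \<in> J. A j = Some i}"

inductive lff_step :: "'j set \<Rightarrow> ('j \<Rightarrow> real) \<Rightarrow> ('j \<Rightarrow> nat) \<Rightarrow> ('j \<Rightarrow> nat) \<Rightarrow> nat \<Rightarrow> real
    \<Rightarrow> nat \<times> ('j \<Rightarrow> nat option) \<Rightarrow> nat \<times> ('j \<Rightarrow> nat option) \<Rightarrow> bool"
  for J p l r m L where
  place: "\<lbrakk> i < m; cur_load J p A i \<le> L; j \<in> avail J l r A i;
            \<forall>k \<in> avail J l r A i. r j \<le> r k \<rbrakk>
          \<Longrightarrow> lff_step J p l r m L (i, A) (i, A(j := Some i))"
| advance: "\<lbrakk> i < m; \<not> (cur_load J p A i \<le> L \<and> avail J l r A i \<noteq> {}) \<rbrakk>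
          \<Longrightarrow> lff_step J p l r m L (i, A) (Suc i, A)"

end

theory Submission
  imports Defs
begin

text \<open>Both the largest job and every interval average p(J(a,b)) / (b - a + 1) are lower bounds
  on any makespan, so L \<le> OPT. The heuristic places a job on a machine only while its load
  is at most L, so no load exceeds L + pmax. If a job j is never placed, let c = r(j) and take
  the maximal block a..c of machines that were left with load above L and holding only jobs
  that end by c. Because jobs are taken least flexible first, every job on the block, and j
  itself, lies in J(a,c); their total size exceeds (c - a + 1) L, contradicting the choice
  of L.\<close>

lemma sum_over_fibres:
  assumes "finite J" "finite S"
  shows "sum p {j\<in>J. g j \<in> S} = (\<Sum>i\<in>S. sum p {j\<in>J. g j = i})"
proof -
  have "sum p {j\<in>J. g j \<in> S} = (\<Sum>i\<in>S. sum p {j \<in> {j\<in>J. g j \<in> S}. g j = i})"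
    by (rule sum.group[symmetric]) (use assms in auto)
  also have "\<dots> = (\<Sum>i\<in>S. sum p {j\<in>J. g j = i})"
    by (intro sum.cong refl arg_cong[of _ _ "sum p"]) auto
  finally show ?thesis .
qed

lemma maximal_run_ending_at:
  fixes c :: nat
  assumes "P c"
  obtains a where "a \<le> c" "\<forall>t\<in>{a..c}. P t" "0 < a \<Longrightarrow> \<not> P (a - 1)"
  using assms
proof (induction c arbitrary: thesis)
  case 0
  then show ?case by auto
next
  case (Suc c)
  show ?case
  proof (cases "P c")
    case True
    then obtain a where "a \<le> c" "\<forall>t\<in>{a..c}. P t" "0 < a \<Longrightarrow> \<not> P (a - 1)"
      using Suc.IH by blast
    then show ?thesis
      using Suc.prems by (metis atLeastAtMost_iff le_Suc_eq)
  next
    case False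
    then show ?thesis
      using Suc.prems(1)[of "Suc c"] Suc.prems(2) by simp
  qed
qed

lemma finite_interval_averages:
  "finite {sum p (jobs_in J l r a b) / real (b - a + 1) | a b. a \<le> b \<and> b \<le> m - 1}"
proof -
  have "{sum p (jobs_in J l r a b) / real (b - a + 1) | a b. a \<le> b \<and> b \<le> m - 1}
     \<subseteq> (\<lambda>(a, b). sum p (jobs_in J l r a b) / real (b - a + 1)) ` ({..m - 1} \<times> {..m - 1})"
    by auto
  then show ?thesis
    by (rule finite_subset) auto
qed

lemma interval_average_le_lbound:
  assumes "a \<le> b" "b < m"
  shows "sum p (jobs_in J l r a b) / real (b - a + 1) \<le> lbound J p l r m"
proof -
  have "sum p (jobs_in J l r a b) / real (b - a + 1)
      \<in> {sum p (jobs_in J l r a b) / real (b - a + 1) | a b. a \<le> b \<and> b \<le> m - 1}"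
    using assms by fastforce
  then have "sum p (jobs_in J l r a b) / real (b - a + 1)
      \<le> Max {sum p (jobs_in J l r a b) / real (b - a + 1) | a b. a \<le> b \<and> b \<le> m - 1}"
    by (rule Max_ge[OF finite_interval_averages])
  then show ?thesis
    unfolding lbound_def by (rule max.coboundedI2)
qed

lemma pmax_le_lbound: "pmax J p \<le> lbound J p l r m"
  unfolding lbound_def by simp

lemma pmax_ge: "finite J \<Longrightarrow> j \<in> J \<Longrightarrow> p j \<le> pmax J p"
  unfolding pmax_def by simp

lemma pmax_nonneg: "finite J \<Longrightarrow> 0 \<le> pmax J p"
  unfolding pmax_def by simp

locale interval_instance =
  fixes J :: "'j set" and p :: "'j \<Rightarrow> real" and l r :: "'j \<Rightarrow> nat" and m :: nat
  assumes finite_jobs: "finite J"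
    and size_nonneg: "j \<in> J \<Longrightarrow> 0 \<le> p j"
    and interval_nonempty: "j \<in> J \<Longrightarrow> l j \<le> r j"
    and interval_bounded: "j \<in> J \<Longrightarrow> r j < m"
begin

lemma load_le_makespan: "i < m \<Longrightarrow> sum p {j\<in>J. \<sigma> j = i} \<le> makespan J p m \<sigma>"
  unfolding makespan_def by (rule Max_ge) auto

lemma pmax_le_makespan:
  assumes "0 < m" "feasible J l r \<sigma>"
  shows "pmax J p \<le> makespan J p m \<sigma>"
proof -
  have "0 \<le> sum p {j\<in>J. \<sigma> j = 0}"
    using size_nonneg by (intro sum_nonneg) auto
  then have "0 \<le> makespan J p m \<sigma>"
    using load_le_makespan[OF assms(1)] by (rule order_trans)
  moreover have "p j \<le> makespan J p m \<sigma>" if "j \<in> J" for j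
  proof -
    have "\<sigma> j < m"
      using that assms(2) interval_bounded unfolding feasible_def by (meson le_less_trans)
    moreover have "p j \<le> sum p {k\<in>J. \<sigma> k = \<sigma> j}"
      using that finite_jobs size_nonneg by (intro member_le_sum) auto
    ultimately show ?thesis
      using load_le_makespan[of "\<sigma> j" \<sigma>] by linarith
  qed
  ultimately show ?thesis
    unfolding pmax_def using finite_jobs by (auto intro: Max.boundedI)
qed

lemma interval_average_le_makespan:
  assumes "feasible J l r \<sigma>" "a \<le> b" "b < m"
  shows "sum p (jobs_in J l r a b) / real (b - a + 1) \<le> makespan J p m \<sigma>"
proof -
  have "jobs_in J l r a b \<subseteq> {j\<in>J. \<sigma> j \<in> {a..b}}"
    using assms(1) unfolding jobs_in_def feasible_def by fastforce
  then have "sum p (jobs_in J l r a b) \<le> sum p {j\<in>J. \<sigma> j \<in> {a..b}}"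
    using finite_jobs size_nonneg by (intro sum_mono2) auto
  also have "\<dots> = (\<Sum>i\<in>{a..b}. sum p {j\<in>J. \<sigma> j = i})"
    using finite_jobs by (rule sum_over_fibres) simp
  also have "\<dots> \<le> (\<Sum>i\<in>{a..b}. makespan J p m \<sigma>)"
    using assms(3) by (intro sum_mono load_le_makespan) auto
  also have "\<dots> = real (b - a + 1) * makespan J p m \<sigma>"
    using assms(2) by simp
  finally show ?thesis
    by (simp add: pos_divide_le_eq mult.commute)
qed

lemma lbound_le_OPT:
  assumes "0 < m"
  shows "lbound J p l r m \<le> OPT J p l r m"
  unfolding OPT_def
proof (rule cInf_greatest)
  have "feasible J l r l"
    using interval_nonempty unfolding feasible_def by auto
  then show "makespan J p m ` {\<sigma>. feasible J l r \<sigma>} \<noteq> {}"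
    by blast
next
  fix x assume "x \<in> makespan J p m ` {\<sigma>. feasible J l r \<sigma>}"
  then obtain \<sigma> where \<sigma>: "feasible J l r \<sigma>" "x = makespan J p m \<sigma>"
    by blast
  have "Max {sum p (jobs_in J l r a b) / real (b - a + 1) | a b. a \<le> b \<and> b \<le> m - 1} \<le> x"
  proof (subst Max_le_iff[OF finite_interval_averages], blast, safe)
    fix a b assume "a \<le> b" "b \<le> m - 1"
    then show "sum p (jobs_in J l r a b) / real (b - a + 1) \<le> x"
      using assms \<sigma> interval_average_le_makespan by simp
  qed
  then show "lbound J p l r m \<le> x"
    unfolding lbound_def using pmax_le_makespan[OF assms] \<sigma> by simp
qed

abbreviation lff_reachable :: "real \<Rightarrow> nat \<times> ('j \<Rightarrow> nat option) \<Rightarrow> bool" where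
  "lff_reachable L s \<equiv> (lff_step J p l r m L)\<^sup>*\<^sup>* (0, \<lambda>_. None) s"

lemma cur_load_place:
  assumes "j \<in> J" "A j = None"
  shows "cur_load J p (A(j := Some i)) t = (if t = i then p j + cur_load J p A t else cur_load J p A t)"
proof -
  have "{k\<in>J. (A(j := Some i)) k = Some t} = (if t = i then insert j else id) {k\<in>J. A k = Some t}"
    using assms by auto
  then show ?thesis
    unfolding cur_load_def using assms finite_jobs by simp
qed

lemma sum_cur_load:
  "finite T \<Longrightarrow> (\<Sum>t\<in>T. cur_load J p A t) = sum p {k\<in>J. A k \<in> Some ` T}"
  unfolding cur_load_def using finite_jobs
  by (simp add: sum_over_fibres sum.reindex)

lemma lff_can_place:
  assumes "i < m" "cur_load J p A i \<le> L" "avail J l r A i \<noteq> {}"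
  obtains j where "j \<in> J" "A j = None" "lff_step J p l r m L (i, A) (i, A(j := Some i))"
proof -
  obtain j where j: "j \<in> avail J l r A i" and least: "\<forall>k\<in>avail J l r A i. r j \<le> r k"
    using assms(3) ex_has_least_nat[of "\<lambda>j. j \<in> avail J l r A i" _ r] by blast
  then have "lff_step J p l r m L (i, A) (i, A(j := Some i))"
    by (rule lff_step.place[OF assms(1,2)])
  with j show ?thesis
    using that unfolding avail_def by blast
qed

lemma lff_reaches_end:
  "i \<le> m \<Longrightarrow> \<exists>A'. (lff_step J p l r m L)\<^sup>*\<^sup>* (i, A) (m, A')"
proof (induction "(m - i) + card {k\<in>J. A k = None}" arbitrary: i A rule: less_induct)
  case less
  consider "i = m" | "i < m" "cur_load J p A i \<le> L" "avail J l r A i \<noteq> {}"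
    | "i < m" "\<not> (cur_load J p A i \<le> L \<and> avail J l r A i \<noteq> {})"
    using less.prems by linarith
  then show ?case
  proof cases
    case 1
    then show ?thesis by blast
  next
    case 2
    then obtain j where j: "j \<in> J" "A j = None"
      and step: "lff_step J p l r m L (i, A) (i, A(j := Some i))"
      by (rule lff_can_place)
    have "card ({k\<in>J. A k = None} - {j}) < card {k\<in>J. A k = None}"
      using j finite_jobs by (intro card_Diff1_less) auto
    moreover have "{k\<in>J. (A(j := Some i)) k = None} = {k\<in>J. A k = None} - {j}"
      by auto
    ultimately have "card {k\<in>J. (A(j := Some i)) k = None} < card {k\<in>J. A k = None}"
      by simp
    then show ?thesis
      using less.hyps[of i "A(j := Some i)"] less.prems step
      by (meson add_strict_left_mono converse_rtranclp_into_rtranclp)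
  next
    case 3
    then have "lff_step J p l r m L (i, A) (Suc i, A)"
      by (rule lff_step.advance)
    then show ?thesis
      using less.hyps[of "Suc i" A] 3 by (meson converse_rtranclp_into_rtranclp diff_less_mono2
          add_less_mono1 lessI Suc_leI)
  qed
qed

lemma lff_reachable_placement:
  "lff_reachable L (i, A) \<Longrightarrow> A k = Some t \<Longrightarrow> l k \<le> t \<and> t \<le> r k \<and> t \<le> i"
proof (induction i A arbitrary: k t rule: rtranclp_induct2)
  case refl
  then show ?case by simp
next
  case (step i A i' A')
  from step.hyps(2) show ?case
  proof cases
    case (place j)
    then show ?thesis
      using step.IH step.prems unfolding avail_def by (auto split: if_splits)
  next
    case advance
    then show ?thesis
      using step.IH step.prems by fastforce
  qed
qed

lemma lff_reachable_load_bound: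
  assumes "0 \<le> L" "lff_reachable L (i, A)"
  shows "cur_load J p A t \<le> L + pmax J p"
  using assms(2)
proof (induction i A arbitrary: t rule: rtranclp_induct2)
  case refl
  then show ?case
    using assms(1) pmax_nonneg[OF finite_jobs] by (simp add: cur_load_def)
next
  case (step i A i' A')
  from step.hyps(2) show ?case
  proof cases
    case (place j)
    then have "j \<in> J" "A j = None"
      unfolding avail_def by auto
    moreover have "p j \<le> pmax J p"
      using pmax_ge[OF finite_jobs \<open>j \<in> J\<close>] .
    ultimately have "cur_load J p (A(j := Some i)) t \<le> L + pmax J p"
      using place(4) step.IH[of t] by (simp add: cur_load_place)
    then show ?thesis
      by (simp only: place(2))
  next
    case advance
    then show ?thesis
      using step.IH by simp
  qed
qed

text \<open>Placement at or before t, not mere placement, is what confines the jobs of an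
  overloaded block to the block.\<close>

definition settled :: "('j \<Rightarrow> nat option) \<Rightarrow> nat \<Rightarrow> nat \<Rightarrow> bool" where
  "settled A t c \<longleftrightarrow> (\<forall>k\<in>J. l k \<le> t \<and> t \<le> r k \<and> r k \<le> c \<longrightarrow> (\<exists>s\<le>t. A k = Some s))"

definition ends_by :: "('j \<Rightarrow> nat option) \<Rightarrow> nat \<Rightarrow> nat \<Rightarrow> bool" where
  "ends_by A t c \<longleftrightarrow> (\<forall>k\<in>J. A k = Some t \<longrightarrow> r k \<le> c)"

definition lff_invariant :: "real \<Rightarrow> ('j \<Rightarrow> nat option) \<Rightarrow> nat \<Rightarrow> bool" where
  "lff_invariant L A i \<longleftrightarrow>
     (\<forall>t<i. \<forall>c\<ge>t. settled A t c \<or> (L < cur_load J p A t \<and> ends_by A t c)) \<and>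
     (\<forall>c\<ge>i. settled A i c \<or> ends_by A i c)"

lemma settled_if_unavailable:
  assumes "\<And>k s. A k = Some s \<Longrightarrow> s \<le> t" and "\<And>k. k \<in> avail J l r A t \<Longrightarrow> c < r k"
  shows "settled A t c"
  unfolding settled_def
proof (intro ballI impI)
  fix k assume "k \<in> J" "l k \<le> t \<and> t \<le> r k \<and> r k \<le> c"
  then have "A k \<noteq> None"
    using assms(2) unfolding avail_def by fastforce
  then show "\<exists>s\<le>t. A k = Some s"
    using assms(1) by blast
qed

lemma lff_invariant_place:
  assumes inv: "lff_invariant L A i" and before: "\<And>k s. A k = Some s \<Longrightarrow> s \<le> i"
    and j: "j \<in> avail J l r A i" and least: "\<forall>k\<in>avail J l r A i. r j \<le> r k"
  shows "lff_invariant L (A(j := Some i)) i"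
proof -
  let ?A = "A(j := Some i)"
  have unplaced: "j \<in> J" "A j = None"
    using j unfolding avail_def by auto
  then have still_settled: "settled A t c \<Longrightarrow> settled ?A t c" for t c
    unfolding settled_def by (metis fun_upd_other option.distinct(1))
  have "settled ?A t c \<or> (L < cur_load J p ?A t \<and> ends_by ?A t c)" if "t < i" "t \<le> c" for t c
  proof -
    have "cur_load J p ?A t = cur_load J p A t"
      using that unplaced by (simp add: cur_load_place)
    moreover have "ends_by ?A t c = ends_by A t c"
      using that unplaced unfolding ends_by_def by auto
    moreover have "settled A t c \<or> (L < cur_load J p A t \<and> ends_by A t c)"
      using inv that unfolding lff_invariant_def by blast
    ultimately show ?thesis
      using still_settled by auto
  qed
  moreover have "settled ?A i c \<or> ends_by ?A i c" if "i \<le> c" for c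
  proof (cases "r j \<le> c")
    case True
    have "settled A i c \<or> ends_by A i c"
      using inv that unfolding lff_invariant_def by blast
    then show ?thesis
      using True still_settled unfolding ends_by_def by auto
  next
    case False
    have unavailable: "c < r k" if "k \<in> avail J l r A i" for k
      using least that False by fastforce
    have "settled A i c"
      using before unavailable by (rule settled_if_unavailable)
    then show ?thesis
      using still_settled by blast
  qed
  ultimately show ?thesis
    unfolding lff_invariant_def by blast
qed

lemma lff_invariant_advance:
  assumes inv: "lff_invariant L A i" and before: "\<And>k s. A k = Some s \<Longrightarrow> s \<le> i"
    and stop: "\<not> (cur_load J p A i \<le> L \<and> avail J l r A i \<noteq> {})"
  shows "lff_invariant L A (Suc i)"
proof -
  have "settled A i c \<or> (L < cur_load J p A i \<and> ends_by A i c)" if "i \<le> c" for c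
  proof (cases "cur_load J p A i \<le> L")
    case True
    then have "settled A i c"
      using stop before by (intro settled_if_unavailable) auto
    then show ?thesis ..
  next
    case False
    then show ?thesis
      using inv that unfolding lff_invariant_def by auto
  qed
  moreover have "ends_by A (Suc i) c" for c
    using before unfolding ends_by_def by (metis Suc_n_not_le_n)
  moreover have "\<forall>t<i. \<forall>c\<ge>t. settled A t c \<or> (L < cur_load J p A t \<and> ends_by A t c)"
    using inv unfolding lff_invariant_def by blast
  ultimately show ?thesis
    unfolding lff_invariant_def less_Suc_eq by blast
qed

lemma lff_reachable_invariant:
  "lff_reachable L (i, A) \<Longrightarrow> lff_invariant L A i"
proof (induction i A rule: rtranclp_induct2)
  case refl
  show ?case
    unfolding lff_invariant_def ends_by_def by simp
next
  case (step i A i' A')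
  have before: "\<And>k s. A k = Some s \<Longrightarrow> s \<le> i"
    using lff_reachable_placement[OF step.hyps(1)] by blast
  from step.hyps(2) show ?case
  proof cases
    case (place j)
    have "lff_invariant L (A(j := Some i)) i"
      using step.IH before place(5,6) by (rule lff_invariant_place)
    then show ?thesis
      by (simp only: place(1,2))
  next
    case advance
    then show ?thesis
      using lff_invariant_advance[OF step.IH before] by simp
  qed
qed

lemma overloaded_block_jobs_in:
  assumes placed: "\<And>k t. A k = Some t \<Longrightarrow> l k \<le> t \<and> t \<le> r k"
    and block: "\<forall>t\<in>{a..c}. ends_by A t c" and left: "0 < a \<Longrightarrow> settled A (a - 1) c"
    and j: "j \<in> J" "A j = None" "r j = c" and "a \<le> c"
  shows "insert j {k\<in>J. A k \<in> Some ` {a..c}} \<subseteq> jobs_in J l r a c"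
proof
  fix k assume k: "k \<in> insert j {k\<in>J. A k \<in> Some ` {a..c}}"
  then have "k \<in> J" "a \<le> r k" "r k \<le> c"
    using j \<open>a \<le> c\<close> block placed unfolding ends_by_def by fastforce+
  moreover have "a \<le> l k"
  proof (rule ccontr)
    assume "\<not> a \<le> l k"
    then obtain s where "s \<le> a - 1" "A k = Some s"
      using left \<open>k \<in> J\<close> \<open>a \<le> r k\<close> \<open>r k \<le> c\<close> unfolding settled_def by fastforce
    then show False
      using k j \<open>\<not> a \<le> l k\<close> by fastforce
  qed
  ultimately show "k \<in> jobs_in J l r a c"
    unfolding jobs_in_def by auto
qed

lemma lff_places_all_jobs:
  assumes average: "\<And>a b. a \<le> b \<Longrightarrow> b < m \<Longrightarrow> sum p (jobs_in J l r a b) / real (b - a + 1) \<le> L"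
    and reach: "lff_reachable L (m, A)" and "j \<in> J"
  shows "A j \<noteq> None"
proof
  assume unplaced: "A j = None"
  define c where "c = r j"
  have inv: "lff_invariant L A m"
    using reach by (rule lff_reachable_invariant)
  have placed: "\<And>k t. A k = Some t \<Longrightarrow> l k \<le> t \<and> t \<le> r k"
    using lff_reachable_placement[OF reach] by blast
  have "c < m"
    using \<open>j \<in> J\<close> interval_bounded c_def by blast
  let ?overloaded = "\<lambda>t. L < cur_load J p A t \<and> ends_by A t c"
  have "\<not> settled A c c"
    using \<open>j \<in> J\<close> unplaced interval_nonempty[OF \<open>j \<in> J\<close>] unfolding settled_def c_def by auto
  then have "?overloaded c"
    using inv \<open>c < m\<close> unfolding lff_invariant_def by blast
  then obtain a where a: "a \<le> c" "\<forall>t\<in>{a..c}. ?overloaded t" "0 < a \<Longrightarrow> \<not> ?overloaded (a - 1)"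
    using maximal_run_ending_at[of ?overloaded c] by blast
  have "settled A (a - 1) c" if "0 < a"
  proof -
    have "a - 1 < m" "a - 1 \<le> c"
      using a(1) \<open>c < m\<close> by linarith+
    then show ?thesis
      using inv a(3)[OF that] unfolding lff_invariant_def by blast
  qed
  then have block_jobs: "insert j {k\<in>J. A k \<in> Some ` {a..c}} \<subseteq> jobs_in J l r a c"
    using placed a(1,2) \<open>j \<in> J\<close> unplaced c_def by (intro overloaded_block_jobs_in) auto
  have "real (c - a + 1) * L = (\<Sum>t\<in>{a..c}. L)"
    using a(1) by simp
  also have "\<dots> < (\<Sum>t\<in>{a..c}. cur_load J p A t)"
    using a(1,2) by (intro sum_strict_mono) auto
  also have "\<dots> = sum p {k\<in>J. A k \<in> Some ` {a..c}}"
    by (simp add: sum_cur_load)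
  also have "\<dots> \<le> sum p (insert j {k\<in>J. A k \<in> Some ` {a..c}})"
    using finite_jobs size_nonneg \<open>j \<in> J\<close> by (intro sum_mono2) auto
  also have "\<dots> \<le> sum p (jobs_in J l r a c)"
    using block_jobs finite_jobs size_nonneg unfolding jobs_in_def by (intro sum_mono2) auto
  also have "\<dots> \<le> real (c - a + 1) * L"
    using average[OF a(1) \<open>c < m\<close>] by (simp add: pos_divide_le_eq mult.commute)
  finally show False
    by simp
qed

end

theorem lemma2:
  fixes J :: "'j set" and p :: "'j \<Rightarrow> real" and l r :: "'j \<Rightarrow> nat" and m :: nat
  assumes "finite J" and "m > 0"
    and "\<forall>j\<in>J. p j \<ge> 0"
    and "\<forall>j\<in>J. l j \<le> r j \<and> r j < m"
  shows "(\<exists>A. (lff_step J p l r m (lbound J p l r m))\<^sup>*\<^sup>* (0, \<lambda>_. None) (m, A))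
       \<and> (\<forall>A. (lff_step J p l r m (lbound J p l r m))\<^sup>*\<^sup>* (0, \<lambda>_. None) (m, A) \<longrightarrow>
              (\<forall>j\<in>J. A j \<noteq> None) \<and>
              (\<forall>i<m. cur_load J p A i \<le> lbound J p l r m + pmax J p))
       \<and> lbound J p l r m + pmax J p \<le> 2 * OPT J p l r m"
proof -
  interpret interval_instance J p l r m
    using assms by unfold_locales auto
  let ?L = "lbound J p l r m"
  have "0 \<le> ?L"
    using pmax_nonneg[OF assms(1)] pmax_le_lbound by (rule order_trans)
  have "\<exists>A. lff_reachable ?L (m, A)"
    using lff_reaches_end by blast
  moreover have "(\<forall>j\<in>J. A j \<noteq> None) \<and> (\<forall>i<m. cur_load J p A i \<le> ?L + pmax J p)"
    if "lff_reachable ?L (m, A)" for A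
    using lff_places_all_jobs[OF interval_average_le_lbound that]
      lff_reachable_load_bound[OF \<open>0 \<le> ?L\<close> that] by blast
  moreover have "?L + pmax J p \<le> 2 * OPT J p l r m"
    using lbound_le_OPT[OF assms(2)] pmax_le_lbound[of J p l r m] by linarith
  ultimately show ?thesis
    by blast
qed

end
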